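(* Let $n\geq 1$ and $k\geq 2$ be integers with $f_k\leq n\leq f_{k+1}$, and let $A^{(n)}=\{1,2,\dots,n\}$. The vertex $v$ of the Fibonacci-sum set-graph $G^F_{A^{(n)}}$ corresponding to the full set $A^{(n)}$ has the maximum number of loops among all vertices, and \[ l(v)=\begin{cases} n+\frac{f_k+1}{2}-\frac{\lfloor 4(k+1)/3\rfloor}{2}, & \text{if } n\leq \frac{f_{k+2}}{2},\\[2pt] 2n+\frac{f_k+1}{2}-\frac{\lfloor 4(k+1)/3\rfloor}{2}-\left\lceil \frac{f_{k+2}-1}{2}\right\rceil, & \text{if } n>\frac{f_{k+2}}{2}.\end{cases} \]
   Context: Let $\mathcal{F}=\{f_m\}_{m\ge 0}$ be the Fibonacci numbers, $f_0=0$, $f_1=1$, $f_m=f_{m-1}+f_{m-2}$. The Fibonacci-sum set-graph $G^F_{A^{(n)}}$ is the multigraph (loops and multiple edges allowed) whose vertices are in bijection with the nonempty subsets of $A^{(n)}=\{1,\dots,n\}$; between the vertices corresponding to distinct subsets $S,T$ there is one edge for each pair $(i',j')$ with $i'\in S$, $j'\in T$, $i'\neq j'$ and $i'+j'\in\mathcal{F}$, and at the vertex corresponding to $S$ there is one loop for each pair of distinct elements $i',j'\in S$ with $i'+j'\in\mathcal{F}$. For a vertex $v$, $l(v)$ denotes its number of loops. *)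

theory Defs
  imports "HOL-Number_Theory.Fib" Complex_Main
begin

text \<open>Number of loops at the vertex of the Fibonacci-sum set-graph corresponding to
  the subset S: one loop per unordered pair of distinct elements of S whose sum is a
  Fibonacci number (unordered pairs represented as (i,j) with i < j).\<close>
definition fib_loops :: "nat set \<Rightarrow> nat" where
  "fib_loops S = card {(i, j). i \<in> S \<and> j \<in> S \<and> i < j \<and> i + j \<in> range fib}"

end

theory Submission
  imports Defs
begin

text \<open>Adding the vertex n + 1 to {1..n} creates one loop for each partner i \<le> n with
  n + 1 + i a Fibonacci number. If f(k) \<le> n + 1 < f(k+1) the only candidate sums are
  f(k+1) and f(k+2), so there are one or two partners according as 2(n + 1) \<le> f(k+2) or not.
  Summing these increments gives the closed form by induction on n; when n + 1 reaches
  the next Fibonacci number the jump of \<lfloor>4(k + 1)/3\<rfloor> is compensated exactly, because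
  f(k) is even precisely when 3 divides k.\<close>

lemma fib_even_iff_3_dvd: "even (fib m) \<longleftrightarrow> 3 dvd m"
proof (induction m rule: less_induct)
  case (less m)
  show ?case
  proof (cases "m < 3")
    case True
    then have "m = 0 \<or> m = 1 \<or> m = 2" by auto
    then show ?thesis by auto
  next
    case False
    then obtain j where j: "m = j + 3" by (intro that[of "m - 3"]) auto
    have "fib (j + 3) = 2 * fib (j + 1) + fib j"
      by (simp add: numeral_3_eq_3 numeral_2_eq_2)
    then have "even (fib m) \<longleftrightarrow> even (fib j)" using j by simp
    also have "\<dots> \<longleftrightarrow> 3 dvd m" using less j by simp
    finally show ?thesis .
  qed
qed

lemma fib_less_fib_imp_less: "fib k < fib j \<Longrightarrow> k < j"
  using fib_mono by (metis not_less)

lemma fib_loops_mono: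
  assumes "S \<subseteq> T" and "finite T"
  shows "fib_loops S \<le> fib_loops T"
  unfolding fib_loops_def
  by (rule card_mono[OF finite_subset[of _ "T \<times> T"]]) (use assms in auto)

definition fib_partners :: "nat \<Rightarrow> nat set" where
  "fib_partners m = {i \<in> {1..<m}. i + m \<in> range fib}"

lemma fib_loops_atLeastAtMost_Suc:
  "fib_loops {1..Suc n} = fib_loops {1..n} + card (fib_partners (Suc n))"
proof -
  let ?P = "\<lambda>i j. i + j \<in> range fib"
  let ?old = "{(i, j). i \<in> {1..n} \<and> j \<in> {1..n} \<and> i < j \<and> ?P i j}"
  let ?new = "(\<lambda>i. (i, Suc n)) ` fib_partners (Suc n)"
  have split: "{(i, j). i \<in> {1..Suc n} \<and> j \<in> {1..Suc n} \<and> i < j \<and> ?P i j} = ?old \<union> ?new"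
    by (auto simp: le_Suc_eq fib_partners_def)
  have "finite ?old" by (rule finite_subset[of _ "{1..n} \<times> {1..n}"]) auto
  moreover have "finite ?new" by (simp add: fib_partners_def)
  moreover have "?old \<inter> ?new = {}" by (auto simp: fib_partners_def)
  moreover have "card ?new = card (fib_partners (Suc n))"
    by (rule card_image) (auto simp: inj_on_def)
  ultimately show ?thesis
    unfolding fib_loops_def split by (simp add: card_Un_disjoint)
qed

lemma fib_partners_eq:
  assumes "fib k \<le> m" and "m < fib (Suc k)"
  shows "fib_partners m = {fib (k + 1) - m, fib (k + 2) - m} \<inter> {1..<m}"
proof
  show "fib_partners m \<subseteq> {fib (k + 1) - m, fib (k + 2) - m} \<inter> {1..<m}"
  proof
    fix i assume "i \<in> fib_partners m"
    then obtain j where i: "i \<in> {1..<m}" and j: "i + m = fib j"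
      by (auto simp: fib_partners_def)
    have "fib k < fib j" using i j assms by simp
    then have "k < j" by (rule fib_less_fib_imp_less)
    have "fib (k + 3) = fib (k + 2) + fib (k + 1)"
      by (simp add: numeral_3_eq_3 numeral_2_eq_2)
    then have "fib j < fib (k + 3)" using i j assms fib_Suc_mono[of "Suc k"] by simp
    then have "j < k + 3" by (rule fib_less_fib_imp_less)
    with \<open>k < j\<close> have "j = k + 1 \<or> j = k + 2" by auto
    then show "i \<in> {fib (k + 1) - m, fib (k + 2) - m} \<inter> {1..<m}" using i j by auto
  qed
next
  show "{fib (k + 1) - m, fib (k + 2) - m} \<inter> {1..<m} \<subseteq> fib_partners m"
  proof
    fix i assume i: "i \<in> {fib (k + 1) - m, fib (k + 2) - m} \<inter> {1..<m}"
    then have "i + m = fib (k + 1) \<or> i + m = fib (k + 2)" by auto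
    with i show "i \<in> fib_partners m"
      unfolding fib_partners_def by (metis IntD2 mem_Collect_eq rangeI)
  qed
qed

lemma card_fib_partners:
  assumes "2 \<le> m" and "fib k \<le> m" and "m < fib (Suc k)"
  shows "card (fib_partners m) = (if fib (k + 2) < 2 * m then 2 else 1)"
proof -
  have "k \<ge> 3"
  proof (rule ccontr)
    assume "\<not> k \<ge> 3"
    then have "k = 0 \<or> k = 1 \<or> k = 2" by auto
    then show False using assms by (auto simp: numeral_2_eq_2)
  qed
  then obtain i where k: "k = i + 2" and "i \<ge> 1" by (intro that[of "k - 2"]) auto
  then have "fib (Suc i) < fib k" using fib_neq_0_nat[of i] by simp
  moreover have "fib (k + 1) = fib k + fib (Suc i)" "fib (k + 2) = fib (k + 1) + fib k"
    using k by (simp_all add: fib_plus_2)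
  ultimately have "fib (k + 1) < 2 * m" "m < fib (k + 2)"
    using assms k by auto
  then have "fib (k + 1) - m \<in> {1..<m}" "fib (k + 2) - m \<in> {1..<m} \<longleftrightarrow> fib (k + 2) < 2 * m"
    and "fib (k + 1) - m \<noteq> fib (k + 2) - m"
    using assms fib_neq_0_nat[of k] k by auto
  then show ?thesis
    unfolding fib_partners_eq[OF assms(2,3)] by (simp add: Int_insert_left)
qed

text \<open>Twice the claimed loop count of {1..n}, for f(k) \<le> n < f(k+1); the ceiling of
  (f(k+2) - 1)/2 in the statement is written as f(k+2) div 2.\<close>
definition double_loop_count :: "nat \<Rightarrow> nat \<Rightarrow> int" where
  "double_loop_count n k = 2 * int n + int (fib k) + 1 - (4 * int k + 4) div 3
     + (if fib (k + 2) < 2 * n then 2 * int n - 2 * int (fib (k + 2) div 2) else 0)"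

lemma double_loop_count_Suc:
  "double_loop_count (Suc n) k = double_loop_count n k + 2 * (if fib (k + 2) < 2 * Suc n then 2 else 1)"
  unfolding double_loop_count_def by (simp add: zdiv_int) presburger

lemma floor_step_eq_fib_parity:
  "(4 * int (i + 2) + 4) div 3 - (4 * int (i + 1) + 4) div 3 = 2 - int (fib i mod 2)"
proof -
  have "int (fib i mod 2) = (if 3 dvd i then 0 else 1)"
    using fib_even_iff_3_dvd[of i] by presburger
  then show ?thesis by presburger
qed

lemma double_loop_count_fib:
  assumes "1 \<le> i"
  shows "double_loop_count (fib (i + 2)) (i + 2) = double_loop_count (fib (i + 2) - 1) (i + 1) + 2"
proof -
  define a b where "a = fib i" and "b = fib (i + 1)"
  have "a \<ge> 1" using assms fib_neq_0_nat unfolding a_def by (simp add: Suc_le_eq)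
  have fibs: "fib (i + 1) = b" "fib (i + 2) = a + b"
    "fib (i + 1 + 2) = a + 2 * b" "fib (i + 2 + 2) = 2 * a + 3 * b"
    unfolding a_def b_def by (simp_all add: eval_nat_numeral)
  have "2 * int ((a + 2 * b) div 2) = int a + 2 * int b - int (a mod 2)" by presburger
  moreover have "a \<le> 2 \<Longrightarrow> int a = 2 - int (a mod 2)" using \<open>a \<ge> 1\<close> by presburger
  ultimately show ?thesis
    using floor_step_eq_fib_parity[of i] \<open>a \<ge> 1\<close>
    unfolding double_loop_count_def fibs a_def[symmetric]
    by (simp add: of_nat_diff)
qed

lemma two_fib_loops_atLeastAtMost:
  assumes "1 \<le> n" and "fib k \<le> n" and "n < fib (Suc k)"
  shows "2 * int (fib_loops {1..n}) = double_loop_count n k"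
  using assms
proof (induction n arbitrary: k rule: nat_induct_at_least)
  case base
  then have "k = 2"
    using fib_mono[of 3 k] fib_mono[of k 1] by (cases "k \<le> 2") (auto simp: eval_nat_numeral le_Suc_eq)
  moreover have "fib_loops {1..1} = 0"
    unfolding fib_loops_def by (auto simp: card_eq_0_iff)
  ultimately show ?case by (simp add: double_loop_count_def eval_nat_numeral)
next
  case (Suc n)
  have step: "2 * int (fib_loops {1..Suc n})
      = 2 * int (fib_loops {1..n}) + 2 * (if fib (k + 2) < 2 * Suc n then 2 else 1)"
    using fib_loops_atLeastAtMost_Suc[of n] card_fib_partners[of "Suc n" k] Suc by simp
  show ?case
  proof (cases "fib k \<le> n")
    case True
    then show ?thesis using step Suc by (simp add: double_loop_count_Suc)
  next
    case False
    then have fib_k: "fib k = Suc n" using Suc.prems by simp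
    have "\<not> k \<le> 2" using fib_k fib_mono[of k 2] Suc.hyps by auto
    then obtain i where k: "k = i + 2" and "1 \<le> i"
      by (intro that[of "k - 2"]) auto
    have "fib (i + 1) \<le> n" "n < fib (Suc (i + 1))"
      using fib_k fib_neq_0_nat[of i] \<open>1 \<le> i\<close> unfolding k by auto
    then have "2 * int (fib_loops {1..n}) = double_loop_count (fib (i + 2) - 1) (i + 1)"
      using Suc.IH fib_k k by simp
    moreover have "\<not> fib (k + 2) < 2 * Suc n"
      using fib_k fib_mono[of k "k + 1"] by (simp add: fib_plus_2)
    ultimately show ?thesis
      using step fib_k k double_loop_count_fib[OF \<open>1 \<le> i\<close>] by simp
  qed
qed

lemma floor_four_thirds: "\<lfloor>4 * (real k + 1) / 3\<rfloor> = (4 * int k + 4) div 3"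
proof -
  have "4 * (real k + 1) / 3 = real_of_int (4 * int k + 4) / real_of_int 3" by simp
  then show ?thesis by (simp only: floor_divide_of_int_eq)
qed

lemma ceiling_pred_half: "\<lceil>(real m - 1) / 2\<rceil> = int (m div 2)"
proof -
  have "(real m - 1) / 2 = - (real_of_int (1 - int m) / real_of_int 2)" by (simp add: field_simps)
  then have "\<lceil>(real m - 1) / 2\<rceil> = - ((1 - int m) div 2)"
    by (simp only: ceiling_minus floor_divide_of_int_eq)
  then show ?thesis by (simp add: zdiv_int)
qed

theorem theorem2p5:
  fixes n k :: nat
  assumes "n \<ge> 1" and "k \<ge> 2" and "fib k \<le> n" and "n < fib (k + 1)"
  shows "(\<forall>S. S \<subseteq> {1..n} \<and> S \<noteq> {} \<longrightarrow> fib_loops S \<le> fib_loops {1..n}) \<and>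
         real (fib_loops {1..n}) =
           (if real n \<le> real (fib (k + 2)) / 2
            then real n + (real (fib k) + 1) / 2 - real_of_int \<lfloor>4 * (real k + 1) / 3\<rfloor> / 2
            else 2 * real n + (real (fib k) + 1) / 2 - real_of_int \<lfloor>4 * (real k + 1) / 3\<rfloor> / 2
                 - real_of_int \<lceil>(real (fib (k + 2)) - 1) / 2\<rceil>)"
proof (intro conjI allI impI)
  show "fib_loops S \<le> fib_loops {1..n}" if "S \<subseteq> {1..n} \<and> S \<noteq> {}" for S
    using that by (simp add: fib_loops_mono)
next
  have "2 * int (fib_loops {1..n}) = double_loop_count n k"
    using two_fib_loops_atLeastAtMost[of n k] assms by simp
  then have "2 * real (fib_loops {1..n}) = real_of_int (double_loop_count n k)"
    by (simp add: of_int_eq_iff[where 'a = real, symmetric])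
  then show "real (fib_loops {1..n}) = (if real n \<le> real (fib (k + 2)) / 2
            then real n + (real (fib k) + 1) / 2 - real_of_int \<lfloor>4 * (real k + 1) / 3\<rfloor> / 2
            else 2 * real n + (real (fib k) + 1) / 2 - real_of_int \<lfloor>4 * (real k + 1) / 3\<rfloor> / 2
                 - real_of_int \<lceil>(real (fib (k + 2)) - 1) / 2\<rceil>)"
    unfolding floor_four_thirds ceiling_pred_half double_loop_count_def
    by (cases "fib (k + 2) < 2 * n") (simp_all add: field_simps)
qed

end
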